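(* Let $N$ and $T$ be integers with $0\le T \le N$, and let $F(T) = T + \lfloor T^2/4\rfloor + 1$. Let $\mathcal{G}=(\mathcal{V},\mathcal{E})$ be a finite undirected graph (self-loops allowed) with $N-T \le |\mathcal{V}| \le N$ in which every vertex has a self-loop. Let $V'$ be the set of vertices contained in a clique of size at least $N-T$, and suppose $V'\ne\emptyset$. Let $$V^* = \{v\in V' : (v,\tilde v)\in\mathcal{E}\ \text{for all } \tilde v \in V'\}.$$ Then $|V^*| \ge N - F(T)$.
   Context: A clique is a set of distinct vertices that are pairwise joined by edges. *)

theory Defs
  imports Main
begin

definition undirected_graph :: "'a set \<Rightarrow> ('a \<Rightarrow> 'a \<Rightarrow> bool) \<Rightarrow> bool" where
  "undirected_graph V E \<longleftrightarrow> finite V \<and> (\<forall>u v. E u v \<longrightarrow> u \<in> V \<and> v \<in> V)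
     \<and> (\<forall>u v. E u v \<longrightarrow> E v u)"

definition is_clique :: "'a set \<Rightarrow> ('a \<Rightarrow> 'a \<Rightarrow> bool) \<Rightarrow> 'a set \<Rightarrow> bool" where
  "is_clique V E C \<longleftrightarrow> C \<subseteq> V \<and> (\<forall>u\<in>C. \<forall>v\<in>C. u \<noteq> v \<longrightarrow> E u v)"

definition F_bound :: "int \<Rightarrow> int" where
  "F_bound T = T + (T^2) div 4 + 1"

definition clique_vertices :: "'a set \<Rightarrow> ('a \<Rightarrow> 'a \<Rightarrow> bool) \<Rightarrow> int \<Rightarrow> 'a set" where
  "clique_vertices V E k = {v \<in> V. \<exists>C. is_clique V E C \<and> v \<in> C \<and> int (card C) \<ge> k}"

end

theory Submission
  imports Defs
begin

text \<open>Let \<open>C\<^sub>0\<close> be a maximum clique, of size \<open>k + c\<close>, among the vertices \<open>P\<close> that lie in a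
clique of size at least \<open>k\<close>, and let \<open>R = P - C\<^sub>0\<close>. A vertex of \<open>P\<close> not adjacent to all of \<open>P\<close>
lies in \<open>R\<close> or is a vertex of \<open>C\<^sub>0\<close> with a non-neighbour in \<open>R\<close>. Swapping a clique \<open>X \<subseteq> R\<close>
into \<open>C\<^sub>0\<close> in place of its non-neighbours shows, by maximality, that \<open>X\<close> has at least \<open>|X|\<close>
non-neighbours in \<open>C\<^sub>0\<close>. Removing from \<open>R\<close>, one large clique \<open>D\<close> at a time, the vertices of
\<open>D - C\<^sub>0\<close>, a removal of \<open>j\<close> vertices accounts for at most \<open>c + j\<close> vertices of \<open>C\<^sub>0\<close> whose
non-neighbours in \<open>R\<close> are all gone; hence at most \<open>|R| (c + 2)\<close> vertices are bad. With
\<open>b = |P| - k = |R| + c \<le> T\<close> this is at most \<open>(b + 2)\<^sup>2 / 4 = b + 1 + b\<^sup>2 / 4\<close>, leaving at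
least \<open>k - 1 - T\<^sup>2 / 4\<close> good vertices.\<close>

lemma mult_le_square_div_4:
  fixes a s :: int
  shows "a * (s - a) \<le> s\<^sup>2 div 4"
proof -
  have "4 * (a * (s - a)) \<le> s\<^sup>2"
    using zero_le_power2[of "s - 2 * a"] by (simp add: power2_eq_square algebra_simps)
  then have "(4 * (a * (s - a))) div 4 \<le> s\<^sup>2 div 4"
    by (rule zdiv_mono1) simp
  then show ?thesis by simp
qed

lemma ex_maximum_clique:
  assumes "finite V"
  obtains C where "is_clique V E C" and "\<And>D. is_clique V E D \<Longrightarrow> card D \<le> card C"
proof -
  have "\<forall>D. is_clique V E D \<longrightarrow> card D < Suc (card V)"
    using assms by (simp add: is_clique_def card_mono less_Suc_eq_le)
  from ex_has_greatest_nat[of "is_clique V E" "{}", OF _ this] that show ?thesis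
    by (auto simp: is_clique_def)
qed

locale large_clique_cover =
  fixes P :: "'a set" and E :: "'a \<Rightarrow> 'a \<Rightarrow> bool" and C\<^sub>0 :: "'a set" and k :: nat
  assumes finite_P: "finite P"
    and sym: "E u v \<Longrightarrow> E v u"
    and loop: "v \<in> P \<Longrightarrow> E v v"
    and clique_C\<^sub>0: "is_clique P E C\<^sub>0"
    and maximum_C\<^sub>0: "is_clique P E C \<Longrightarrow> card C \<le> card C\<^sub>0"
    and k_le_card_C\<^sub>0: "k \<le> card C\<^sub>0"
    and covered: "u \<in> P \<Longrightarrow> \<exists>D. is_clique P E D \<and> u \<in> D \<and> k \<le> card D"
begin

abbreviation "R \<equiv> P - C\<^sub>0"

abbreviation "slack \<equiv> card C\<^sub>0 - k"

definition non_neighbours :: "'a set \<Rightarrow> 'a set" where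
  "non_neighbours X = {v \<in> C\<^sub>0. \<exists>x\<in>X. \<not> E v x}"

definition confined :: "'a set \<Rightarrow> 'a set" where
  "confined M = {v \<in> C\<^sub>0. (\<exists>x\<in>R. \<not> E v x) \<and> (\<forall>x\<in>R. \<not> E v x \<longrightarrow> x \<in> M)}"

lemma C\<^sub>0_subset: "C\<^sub>0 \<subseteq> P"
  using clique_C\<^sub>0 by (simp add: is_clique_def)

lemma finite_C\<^sub>0: "finite C\<^sub>0"
  using C\<^sub>0_subset finite_P finite_subset by blast

lemma card_P: "card P = card C\<^sub>0 + card R"
  using C\<^sub>0_subset finite_P by (simp add: card_Diff_subset card_mono finite_subset)

lemma card_le_card_non_neighbours:
  assumes X: "X \<subseteq> R" and clique_X: "is_clique P E X"
  shows "card X \<le> card (non_neighbours X)"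
proof -
  let ?Z = "non_neighbours X"
  let ?C = "(C\<^sub>0 - ?Z) \<union> X"
  have "E u v" if "u \<in> ?C" "v \<in> ?C" "u \<noteq> v" for u v
    using that clique_X clique_C\<^sub>0 sym[of v u]
    unfolding is_clique_def non_neighbours_def by auto
  then have "is_clique P E ?C"
    using X clique_C\<^sub>0 by (auto simp: is_clique_def)
  then have "card ?C \<le> card C\<^sub>0"
    by (rule maximum_C\<^sub>0)
  moreover have "finite X"
    using X finite_P finite_subset by blast
  then have "card ?C = card (C\<^sub>0 - ?Z) + card X"
    using X finite_C\<^sub>0 by (intro card_Un_disjoint) auto
  moreover have Z: "?Z \<subseteq> C\<^sub>0"
    by (auto simp: non_neighbours_def)
  then have "card (C\<^sub>0 - ?Z) = card C\<^sub>0 - card ?Z"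
    using finite_C\<^sub>0 finite_subset card_Diff_subset by metis
  moreover have "card ?Z \<le> card C\<^sub>0"
    using Z finite_C\<^sub>0 by (rule card_mono[rotated])
  ultimately show ?thesis
    by linarith
qed

lemma card_confined_Int_non_neighbours:
  assumes M: "M \<subseteq> R" and D: "is_clique P E D" "k \<le> card D"
  shows "card (confined M \<inter> non_neighbours (D - C\<^sub>0)) \<le> slack + card ((D - C\<^sub>0) \<inter> M)"
proof -
  let ?X = "D - C\<^sub>0"
  let ?Z = "non_neighbours (?X - M)"
  have fin_D: "finite D"
    using D(1) finite_P finite_subset unfolding is_clique_def by blast
  have "card D = card (D \<inter> C\<^sub>0) + card ?X"
    using fin_D by (rule card_Int_Diff)
  moreover have "card (C\<^sub>0 - D) = card C\<^sub>0 - card (C\<^sub>0 \<inter> D)"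
    using finite_C\<^sub>0 by (simp add: card_Diff_subset_Int)
  moreover have "card (C\<^sub>0 \<inter> D) \<le> card C\<^sub>0"
    using finite_C\<^sub>0 by (simp add: card_mono)
  ultimately have card_C\<^sub>0_D: "card (C\<^sub>0 - D) \<le> slack + card ?X"
    using D(2) by (simp add: Int_commute)
  have non_nbrs_X: "non_neighbours ?X \<subseteq> C\<^sub>0 - D"
  proof
    fix v
    assume "v \<in> non_neighbours ?X"
    then obtain x where "v \<in> C\<^sub>0" "x \<in> ?X" "\<not> E v x"
      by (auto simp: non_neighbours_def)
    with D(1) show "v \<in> C\<^sub>0 - D"
      unfolding is_clique_def by (metis Diff_iff)
  qed
  have Z: "?Z \<subseteq> C\<^sub>0 - D"
    using non_nbrs_X unfolding non_neighbours_def by blast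
  have "?X - M \<subseteq> R" and "is_clique P E (?X - M)"
    using D(1) unfolding is_clique_def by auto
  then have card_X_M: "card (?X - M) \<le> card ?Z"
    by (rule card_le_card_non_neighbours)
  have "v \<notin> ?Z" if "v \<in> confined M" for v
  proof
    assume "v \<in> ?Z"
    then obtain x where "x \<in> ?X - M" "\<not> E v x"
      by (auto simp: non_neighbours_def)
    moreover have "?X \<subseteq> R"
      using D(1) by (auto simp: is_clique_def)
    ultimately show False
      using that by (auto simp: confined_def)
  qed
  then have "confined M \<inter> non_neighbours ?X \<subseteq> (C\<^sub>0 - D) - ?Z"
    using non_nbrs_X by blast
  then have "card (confined M \<inter> non_neighbours ?X) \<le> card ((C\<^sub>0 - D) - ?Z)"
    using finite_C\<^sub>0 by (intro card_mono) auto
  also have "\<dots> = card (C\<^sub>0 - D) - card ?Z"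
    using Z finite_C\<^sub>0 by (intro card_Diff_subset) (auto intro: finite_subset)
  finally have "card (confined M \<inter> non_neighbours ?X) \<le> card (C\<^sub>0 - D) - card ?Z" .
  moreover have "card ?X = card (?X \<inter> M) + card (?X - M)"
    using fin_D by (simp add: card_Int_Diff)
  ultimately show ?thesis
    using card_C\<^sub>0_D card_X_M by linarith
qed

lemma card_confined_le: "M \<subseteq> R \<Longrightarrow> card (confined M) \<le> (slack + 1) * card M"
proof (induction "card M" arbitrary: M rule: less_induct)
  case less
  show ?case
  proof (cases "M = {}")
    case True
    then have "confined M = {}"
      by (auto simp: confined_def)
    then show ?thesis by simp
  next
    case False
    then obtain u where "u \<in> M" by blast
    with less.prems obtain D where D: "is_clique P E D" "u \<in> D" "k \<le> card D"
      using covered by blast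
    let ?X = "D - C\<^sub>0"
    let ?j = "card (?X \<inter> M)"
    have fin_M: "finite M"
      using less.prems finite_P finite_subset by blast
    have "u \<in> ?X \<inter> M"
      using D(2) \<open>u \<in> M\<close> less.prems by blast
    then have "?j \<ge> 1"
      using fin_M by (metis One_nat_def Suc_leI card_gt_0_iff empty_iff finite_Int)
    moreover have "?j \<le> card M"
      using fin_M by (simp add: card_mono)
    moreover have "card (M - ?X) = card M - ?j"
      using fin_M by (simp add: card_Diff_subset_Int Int_commute)
    ultimately have IH: "card (confined (M - ?X)) \<le> (slack + 1) * (card M - ?j)"
      using less.hyps[of "M - ?X"] less.prems by auto
    have "confined M - non_neighbours ?X \<subseteq> confined (M - ?X)"
      by (auto simp: confined_def non_neighbours_def)
    then have "card (confined M - non_neighbours ?X) \<le> card (confined (M - ?X))"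
      using finite_C\<^sub>0 by (intro card_mono) (auto simp: confined_def)
    moreover have "card (confined M)
        = card (confined M \<inter> non_neighbours ?X) + card (confined M - non_neighbours ?X)"
      using finite_C\<^sub>0 by (intro card_Int_Diff) (simp add: confined_def)
    moreover have "slack + ?j \<le> (slack + 1) * ?j"
      using \<open>?j \<ge> 1\<close> by (simp add: mult_le_mono2[of 1 ?j slack, simplified])
    ultimately have "card (confined M) \<le> (slack + 1) * (card M - ?j) + (slack + 1) * ?j"
      using IH card_confined_Int_non_neighbours[OF less.prems D(1,3)] by linarith
    also have "\<dots> = (slack + 1) * card M"
      using \<open>?j \<le> card M\<close> by (simp add: add_mult_distrib2[symmetric])
    finally show ?thesis .
  qed
qed

lemma bad_subset: "{v \<in> P. \<exists>w\<in>P. \<not> E v w} \<subseteq> R \<union> confined R"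
proof
  fix v
  assume "v \<in> {v \<in> P. \<exists>w\<in>P. \<not> E v w}"
  then obtain w where "v \<in> P" "w \<in> P" "\<not> E v w"
    by blast
  moreover have "w \<notin> C\<^sub>0" if "v \<in> C\<^sub>0"
    using that clique_C\<^sub>0 loop \<open>v \<in> P\<close> \<open>\<not> E v w\<close> unfolding is_clique_def by metis
  ultimately show "v \<in> R \<union> confined R"
    by (auto simp: confined_def)
qed

lemma card_bad_le: "card {v \<in> P. \<exists>w\<in>P. \<not> E v w} \<le> card R * (slack + 2)"
proof -
  have "card {v \<in> P. \<exists>w\<in>P. \<not> E v w} \<le> card (R \<union> confined R)"
    using bad_subset finite_P by (intro card_mono) (auto simp: confined_def finite_C\<^sub>0)
  also have "\<dots> \<le> card R + card (confined R)"
    by (rule card_Un_le)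
  also have "\<dots> \<le> card R * (slack + 2)"
    using card_confined_le[of R] by (simp add: algebra_simps)
  finally show ?thesis .
qed

theorem card_universal_ge:
  "int (card {v \<in> P. \<forall>w\<in>P. E v w}) \<ge> int k - 1 - (int (card P) - int k)\<^sup>2 div 4"
proof -
  let ?bad = "{v \<in> P. \<exists>w\<in>P. \<not> E v w}"
  define a where "a = int (card R)"
  define b where "b = int (card P) - int k"
  have b: "b = a + int slack"
    using card_P k_le_card_C\<^sub>0 by (simp add: a_def b_def)
  have "{v \<in> P. \<forall>w\<in>P. E v w} = P - ?bad"
    by blast
  then have "int (card {v \<in> P. \<forall>w\<in>P. E v w}) = int (card P) - int (card ?bad)"
    using finite_P by (simp add: card_Diff_subset card_mono of_nat_diff)
  moreover have "int (card ?bad) \<le> int (card R * (slack + 2))"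
    using card_bad_le by (simp only: of_nat_le_iff)
  moreover have "int (card R * (slack + 2)) = a * ((b + 2) - a)"
    by (simp add: a_def b distrib_left)
  moreover have "a * ((b + 2) - a) \<le> b\<^sup>2 div 4 + b + 1"
    using mult_le_square_div_4[of a "b + 2"] by (simp add: power2_eq_square algebra_simps)
  ultimately show ?thesis
    unfolding b_def by linarith
qed

end

lemma large_clique_cover_clique_vertices:
  assumes graph: "undirected_graph V E" and loop: "\<forall>v\<in>V. E v v"
    and nonempty: "clique_vertices V E (int k) \<noteq> {}"
  obtains C\<^sub>0 where "large_clique_cover (clique_vertices V E (int k)) E C\<^sub>0 k"
proof -
  let ?P = "clique_vertices V E (int k)"
  have fin: "finite V" and sym: "\<And>u v. E u v \<Longrightarrow> E v u"
    using graph by (auto simp: undirected_graph_def)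
  obtain C\<^sub>0 where C\<^sub>0: "is_clique V E C\<^sub>0" and max: "\<And>D. is_clique V E D \<Longrightarrow> card D \<le> card C\<^sub>0"
    using ex_maximum_clique[OF fin] by blast
  have P_V: "?P \<subseteq> V"
    by (auto simp: clique_vertices_def)
  have large_subset_P: "D \<subseteq> ?P" if "is_clique V E D" "k \<le> card D" for D
    using that by (auto simp: clique_vertices_def is_clique_def)
  have clique_V: "is_clique V E D" if "is_clique ?P E D" for D
    using that P_V by (auto simp: is_clique_def)
  obtain v D where "v \<in> ?P" "is_clique V E D" "k \<le> card D"
    using nonempty by (auto simp: clique_vertices_def)
  then have k_le: "k \<le> card C\<^sub>0"
    using max le_trans by blast
  have "large_clique_cover ?P E C\<^sub>0 k"
  proof unfold_locales
    show "finite ?P"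
      using P_V fin by (rule finite_subset)
    show "E v u" if "E u v" for u v
      using that by (rule sym)
    show "E v v" if "v \<in> ?P" for v
      using that P_V loop by blast
    show "is_clique ?P E C\<^sub>0"
      using C\<^sub>0 large_subset_P[OF C\<^sub>0 k_le] by (simp add: is_clique_def)
    show "card C \<le> card C\<^sub>0" if "is_clique ?P E C" for C
      using that by (intro max clique_V)
    show "k \<le> card C\<^sub>0"
      by (rule k_le)
    show "\<exists>D. is_clique ?P E D \<and> u \<in> D \<and> k \<le> card D" if "u \<in> ?P" for u
    proof -
      from that obtain D where D: "is_clique V E D" "u \<in> D" "k \<le> card D"
        by (auto simp: clique_vertices_def)
      then have "is_clique ?P E D"
        using large_subset_P[OF D(1,3)] by (simp add: is_clique_def)
      with D show ?thesis by blast
    qed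
  qed
  then show ?thesis by (rule that)
qed

theorem mainTheorem6:
  fixes N T :: int and V :: "'a set" and E :: "'a \<Rightarrow> 'a \<Rightarrow> bool"
  assumes "0 \<le> T" and "T \<le> N"
    and "undirected_graph V E"
    and "N - T \<le> int (card V)" and "int (card V) \<le> N"
    and "\<forall>v\<in>V. E v v"
    and "clique_vertices V E (N - T) \<noteq> {}"
  shows "int (card {v \<in> clique_vertices V E (N - T).
                      \<forall>w\<in>clique_vertices V E (N - T). E v w}) \<ge> N - F_bound T"
proof -
  define k where "k = nat (N - T)"
  have k: "int k = N - T"
    using assms(2) by (simp add: k_def)
  let ?P = "clique_vertices V E (int k)"
  obtain C\<^sub>0 where cover: "large_clique_cover ?P E C\<^sub>0 k"
    using large_clique_cover_clique_vertices[OF assms(3,6)] assms(7) k by metis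
  interpret large_clique_cover ?P E C\<^sub>0 k
    by (rule cover)
  have "card ?P \<le> card V"
    using assms(3) by (intro card_mono) (auto simp: undirected_graph_def clique_vertices_def)
  then have "0 \<le> int (card ?P) - int k" and "int (card ?P) - int k \<le> T"
    using card_P k_le_card_C\<^sub>0 assms(5) k by linarith+
  then have "(int (card ?P) - int k)\<^sup>2 div 4 \<le> T\<^sup>2 div 4"
    by (intro zdiv_mono1 power_mono) auto
  with card_universal_ge show ?thesis
    by (simp add: F_bound_def k)
qed

end
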